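(* Let $N=2^n$. Every discrete bivariate Haar wavelet $\mathbf{h}^e_{p,q}$ satisfies $\|\nabla\mathbf{h}^e_{p,q}\|_1\le 8$.
   Context: Haar system: $H^0=\mathbf{1}_{[0,1)}$, $H^1=\mathbf{1}_{[0,1/2)}-\mathbf{1}_{[1/2,1)}$; for $e=(e_1,e_2)\in\{(0,1),(1,0),(1,1)\}$, $H^e(u,v)=H^{e_1}(u)H^{e_2}(v)$ and $H^e_{p,q}(x)=2^pH^e(2^px-q)$ for $p\ge0$, $q\in\mathbb{Z}^2\cap2^p[0,1)^2$. Identifying $\mathbf{X}\in\mathbb{C}^{N\times N}$ with the function on $[0,1)^2$ equal to $NX_{j,k}$ on $[\frac{j-1}{N},\frac jN)\times[\frac{k-1}{N},\frac kN)$, the discrete bivariate Haar wavelets $\mathbf{h}^e_{p,q}$ are the images corresponding to $H^e_{p,q}$, $0\le p\le n-1$. Discrete gradient: $\nabla\mathbf{X}$ collects all differences $X_{j+1,k}-X_{j,k}$ ($1\le j\le N-1$) and $X_{j,k+1}-X_{j,k}$ ($1\le k\le N-1$), and $\|\nabla\mathbf{X}\|_1$ is the sum of their absolute values. *)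

theory Defs
  imports Complex_Main
begin

definition haar0 :: "real \<Rightarrow> real" where
  "haar0 x = (if 0 \<le> x \<and> x < 1 then 1 else 0)"

definition haar1 :: "real \<Rightarrow> real" where
  "haar1 x = (if 0 \<le> x \<and> x < 1/2 then 1 else if 1/2 \<le> x \<and> x < 1 then -1 else 0)"

definition haar_uni :: "nat \<Rightarrow> real \<Rightarrow> real" where
  "haar_uni b = (if b = 0 then haar0 else haar1)"

definition haar_biv :: "nat \<times> nat \<Rightarrow> real \<times> real \<Rightarrow> real" where
  "haar_biv e x = haar_uni (fst e) (fst x) * haar_uni (snd e) (snd x)"

definition haar_pq :: "nat \<times> nat \<Rightarrow> nat \<Rightarrow> int \<times> int \<Rightarrow> real \<times> real \<Rightarrow> real" where
  "haar_pq e p q x =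
     2 ^ p * haar_biv e (2 ^ p * fst x - of_int (fst q), 2 ^ p * snd x - of_int (snd q))"

text \<open>Discrete Haar wavelet image of size N = 2^n, indices j,k in {1..N}:
  the function H^e_{p,q} (constant on the grid cells since p \<le> n-1) takes the
  value N * X_{j,k} on the cell [(j-1)/N, j/N) x [(k-1)/N, k/N); we evaluate it at
  the lower-left corner of the cell.\<close>
definition haar_img :: "nat \<Rightarrow> nat \<times> nat \<Rightarrow> nat \<Rightarrow> int \<times> int \<Rightarrow> nat \<Rightarrow> nat \<Rightarrow> real" where
  "haar_img n e p q j k =
     haar_pq e p q ((real j - 1) / 2 ^ n, (real k - 1) / 2 ^ n) / 2 ^ n"

definition grad_l1 :: "nat \<Rightarrow> (nat \<Rightarrow> nat \<Rightarrow> real) \<Rightarrow> real" where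
  "grad_l1 N X =
     (\<Sum>j\<in>{1..<N}. \<Sum>k\<in>{1..N}. \<bar>X (j+1) k - X j k\<bar>)
   + (\<Sum>j\<in>{1..N}. \<Sum>k\<in>{1..<N}. \<bar>X j (k+1) - X j k\<bar>)"

end

theory Submission
  imports Defs
begin

text \<open>The image is a tensor product \<open>X j k = A j * B k / 2r\<close> of two sampled univariate Haar
  functions, each supported on \<open>2r\<close> consecutive pixels and bounded by 1, where \<open>2r = 2^(n-p)\<close>.
  For such a product, \<open>\<parallel>\<nabla>X\<parallel>\<^sub>1 = (TV(A) \<parallel>B\<parallel>\<^sub>1 + \<parallel>A\<parallel>\<^sub>1 TV(B)) / 2r\<close>. A sampled Haar function
  jumps by at most 1, 2, 1 at its three breakpoints, so \<open>TV \<le> 4\<close>, while \<open>\<parallel>\<cdot>\<parallel>\<^sub>1 \<le> 2r\<close>;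
  hence \<open>\<parallel>\<nabla>X\<parallel>\<^sub>1 \<le> (4 \<cdot> 2r + 2r \<cdot> 4) / 2r = 8\<close>.\<close>

definition variation :: "nat \<Rightarrow> (nat \<Rightarrow> real) \<Rightarrow> real" where
  "variation N A = (\<Sum>j\<in>{1..<N}. \<bar>A (j+1) - A j\<bar>)"

definition norm1 :: "nat \<Rightarrow> (nat \<Rightarrow> real) \<Rightarrow> real" where
  "norm1 N A = (\<Sum>j\<in>{1..N}. \<bar>A j\<bar>)"

lemma grad_l1_tensor:
  fixes A B :: "nat \<Rightarrow> real"
  assumes "c \<ge> 0"
  shows "grad_l1 N (\<lambda>j k. c * A j * B k) =
    c * (variation N A * norm1 N B + norm1 N A * variation N B)"
proof -
  have sep: "(\<Sum>j\<in>I. \<Sum>k\<in>K. c * (f j * g k)) = c * (sum f I * sum g K)"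
    for f g :: "nat \<Rightarrow> real" and I K
    by (subst sum_product) (simp only: sum_distrib_left)
  have "\<bar>c * A (j+1) * B k - c * A j * B k\<bar> = c * (\<bar>A (j+1) - A j\<bar> * \<bar>B k\<bar>)" for j k
    using assms by (simp add: abs_mult left_diff_distrib[symmetric] right_diff_distrib[symmetric])
  moreover have "\<bar>c * A j * B (k+1) - c * A j * B k\<bar> = c * (\<bar>A j\<bar> * \<bar>B (k+1) - B k\<bar>)" for j k
    using assms by (simp add: abs_mult right_diff_distrib[symmetric])
  ultimately show ?thesis
    unfolding grad_l1_def variation_def norm1_def by (simp only: sep distrib_left)
qed

definition haar_step :: "nat \<Rightarrow> nat \<Rightarrow> int \<Rightarrow> real" where
  "haar_step b r t = haar_uni b (of_int t / (2 * real r))"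

lemma haar_step_eq:
  assumes "r > 0"
  shows "haar_step b r t =
    (if 0 \<le> t \<and> t < 2 * int r then if b = 0 \<or> t < int r then 1 else -1 else 0)"
proof -
  have "(0 \<le> of_int t / (2 * real r)) = (0 \<le> t)"
    and "(of_int t / (2 * real r) < 1) = (t < 2 * int r)"
    and "(of_int t / (2 * real r) < 1/2) = (t < int r)"
    using assms of_int_less_iff[of t "2 * int r", where 'a=real]
      of_int_less_iff[of t "int r", where 'a=real]
    by (simp_all add: divide_simps)
  then show ?thesis
    by (auto simp: haar_step_def haar_uni_def haar0_def haar1_def not_less[symmetric])
qed

lemma sum_if_int_eq_le:
  assumes "finite A" "a \<ge> 0"
  shows "(\<Sum>j\<in>A. if int j = c then a else 0) \<le> (a::real)"
proof -
  have "(\<Sum>j\<in>A. if int j = c then a else 0)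
      = (\<Sum>j\<in>A. if j = nat c then (if c \<ge> 0 then a else 0) else 0)"
    by (rule sum.cong) auto
  also have "\<dots> \<le> a"
    using assms by (simp add: sum.delta)
  finally show ?thesis .
qed

lemma haar_step_jump_le:
  assumes "r > 0"
  shows "\<bar>haar_step b r (u - s) - haar_step b r (u - 1 - s)\<bar> \<le>
    (if u = s then 1 else 0) + (if u = s + int r then 2 else 0)
      + (if u = s + 2 * int r then 1 else 0)"
  using assms by (simp add: haar_step_eq)

lemma variation_haar_step_le:
  assumes "r > 0"
  shows "variation N (\<lambda>j. haar_step b r (int j - 1 - s)) \<le> 4"
proof -
  have "variation N (\<lambda>j. haar_step b r (int j - 1 - s))
      = (\<Sum>j\<in>{1..<N}. \<bar>haar_step b r (int j - s) - haar_step b r (int j - 1 - s)\<bar>)"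
    unfolding variation_def by simp
  also have "\<dots> \<le> (\<Sum>j\<in>{1..<N}. (if int j = s then 1 else 0)
      + (if int j = s + int r then 2 else 0) + (if int j = s + 2 * int r then 1 else 0))"
    by (intro sum_mono haar_step_jump_le assms)
  also have "\<dots> \<le> 1 + 2 + 1"
    unfolding sum.distrib by (intro add_mono sum_if_int_eq_le) auto
  finally show ?thesis by simp
qed

lemma norm1_haar_step_le:
  assumes "r > 0"
  shows "norm1 N (\<lambda>j. haar_step b r (int j - 1 - s)) \<le> 2 * real r"
proof -
  define S where "S = {j\<in>{1..N}. int j - 1 - s \<in> {0..<2 * int r}}"
  have "norm1 N (\<lambda>j. haar_step b r (int j - 1 - s))
      \<le> (\<Sum>j\<in>{1..N}. if j \<in> S then 1 else 0)"
    unfolding norm1_def S_def using assms by (intro sum_mono) (simp add: haar_step_eq)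
  also have "\<dots> = real (card S)"
    by (simp add: S_def sum.inter_filter[symmetric])
  also have "card S \<le> 2 * r"
  proof -
    have "card S = card (int ` S)"
      by (simp add: card_image)
    also have "\<dots> \<le> card {s + 1..s + 2 * int r}"
      by (rule card_mono) (auto simp: S_def)
    finally show ?thesis by simp
  qed
  finally show ?thesis by simp
qed

lemma haar_img_eq_tensor:
  assumes "p < n"
  defines "r \<equiv> 2 ^ (n - p - 1) :: nat"
  shows "haar_img n e p q = (\<lambda>j k. 1 / (2 * real r)
    * haar_step (fst e) r (int j - 1 - fst q * (2 * int r))
    * haar_step (snd e) r (int k - 1 - snd q * (2 * int r)))"
proof -
  have two_r: "(2::real) ^ n = 2 ^ p * (2 * real r)"
  proof -
    have n: "n = p + (n - p - 1) + 1"
      using assms(1) by simp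
    show ?thesis
      unfolding r_def by (subst n) (simp add: power_add)
  qed
  have "r > 0"
    by (simp add: r_def)
  then have "2 ^ p * ((real j - 1) / 2 ^ n) - of_int t
      = of_int (int j - 1 - t * (2 * int r)) / (2 * real r)"
    for j and t :: int
    unfolding two_r by (simp add: field_simps)
  then show ?thesis
    unfolding haar_img_def haar_pq_def haar_biv_def haar_step_def
    by (intro ext) (simp add: two_r)
qed

theorem lemma10:
  fixes n p :: nat and e :: "nat \<times> nat" and q :: "int \<times> int"
  assumes "e \<in> {(0,1), (1,0), (1,1)}"
    and "p \<le> n - 1" and "n \<ge> 1"
    and "0 \<le> fst q" and "fst q < 2 ^ p"
    and "0 \<le> snd q" and "snd q < 2 ^ p"
  shows "grad_l1 (2 ^ n) (haar_img n e p q) \<le> 8"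
proof -
  define r :: nat where "r = 2 ^ (n - p - 1)"
  have r: "r > 0"
    by (simp add: r_def)
  define A where "A j = haar_step (fst e) r (int j - 1 - fst q * (2 * int r))" for j
  define B where "B k = haar_step (snd e) r (int k - 1 - snd q * (2 * int r))" for k
  have "grad_l1 (2 ^ n) (haar_img n e p q)
      = grad_l1 (2 ^ n) (\<lambda>j k. 1 / (2 * real r) * A j * B k)"
    using assms(2,3) by (simp add: haar_img_eq_tensor A_def B_def r_def)
  also have "\<dots> = 1 / (2 * real r)
      * (variation (2 ^ n) A * norm1 (2 ^ n) B + norm1 (2 ^ n) A * variation (2 ^ n) B)"
    by (rule grad_l1_tensor) simp
  also have "\<dots> \<le> 1 / (2 * real r) * (4 * (2 * real r) + (2 * real r) * 4)"
    unfolding A_def B_def using r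
    by (intro mult_left_mono add_mono mult_mono variation_haar_step_le norm1_haar_step_le)
      (auto simp: variation_def norm1_def intro: sum_nonneg)
  also have "\<dots> = 8"
    using r by simp
  finally show ?thesis .
qed

end
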